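(* Let $G$ be an edge-coloured multigraph, $N$ a matching in $G$ and $C$ a set of colours such that for each $c \in C$ there are at least $k$ edges of $N$ which are $c$-horns in $N$. If $k|C| > 2|N|$, then there exists a $C$-rainbow horn in $N$.
   Context: Let $V$ be the vertex set of $G$. For vertex sets $X,Y$, $E[X,Y]$ is the set of edges with one endpoint in $X$ and the other in $Y$; for an edge $e=xy$, $E[e,Y]$ means $E[\{x,y\},Y]$. A horn in a matching $N$ is an edge $e \in N$ for which there exist two vertex-disjoint edges $e_1,e_2 \in E[e, V\setminus V(N)]$. It is a $c$-horn if such $e_1,e_2$ exist that are both of colour $c$, and it is a $C$-rainbow horn if such $e_1,e_2$ exist with $e_1$ of colour $c_1$ and $e_2$ of colour $c_2$ for two distinct $c_1,c_2 \in C$. *)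

theory Defs
  imports Main
begin

text \<open>An edge-coloured multigraph: vertex set V, edge set E (edges are abstract
  objects, so parallel edges are allowed), an endpoint map ends giving each edge
  its two-element set of endpoints, and a colouring col.\<close>

definition multigraph :: "'v set \<Rightarrow> 'e set \<Rightarrow> ('e \<Rightarrow> 'v set) \<Rightarrow> bool" where
  "multigraph V E ends \<longleftrightarrow> finite V \<and> finite E \<and>
     (\<forall>e\<in>E. ends e \<subseteq> V \<and> card (ends e) = 2)"

definition matching :: "'e set \<Rightarrow> ('e \<Rightarrow> 'v set) \<Rightarrow> 'e set \<Rightarrow> bool" where
  "matching E ends N \<longleftrightarrow> N \<subseteq> E \<and>
     (\<forall>e\<in>N. \<forall>f\<in>N. e \<noteq> f \<longrightarrow> ends e \<inter> ends f = {})"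

definition vset :: "('e \<Rightarrow> 'v set) \<Rightarrow> 'e set \<Rightarrow> 'v set" where
  "vset ends N = (\<Union>e\<in>N. ends e)"

definition edges_between :: "'e set \<Rightarrow> ('e \<Rightarrow> 'v set) \<Rightarrow> 'v set \<Rightarrow> 'v set \<Rightarrow> 'e set" where
  "edges_between E ends X Y = {f\<in>E. \<exists>x\<in>X. \<exists>y\<in>Y. ends f = {x, y}}"

definition horn :: "'v set \<Rightarrow> 'e set \<Rightarrow> ('e \<Rightarrow> 'v set) \<Rightarrow> 'e set \<Rightarrow> 'e \<Rightarrow> bool" where
  "horn V E ends N e \<longleftrightarrow> e \<in> N \<and>
     (\<exists>e1\<in>edges_between E ends (ends e) (V - vset ends N).
      \<exists>e2\<in>edges_between E ends (ends e) (V - vset ends N).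
        ends e1 \<inter> ends e2 = {})"

definition c_horn :: "'v set \<Rightarrow> 'e set \<Rightarrow> ('e \<Rightarrow> 'v set) \<Rightarrow> ('e \<Rightarrow> 'c) \<Rightarrow> 'e set \<Rightarrow> 'c \<Rightarrow> 'e \<Rightarrow> bool" where
  "c_horn V E ends col N c e \<longleftrightarrow> e \<in> N \<and>
     (\<exists>e1\<in>edges_between E ends (ends e) (V - vset ends N).
      \<exists>e2\<in>edges_between E ends (ends e) (V - vset ends N).
        ends e1 \<inter> ends e2 = {} \<and> col e1 = c \<and> col e2 = c)"

definition rainbow_horn :: "'v set \<Rightarrow> 'e set \<Rightarrow> ('e \<Rightarrow> 'v set) \<Rightarrow> ('e \<Rightarrow> 'c) \<Rightarrow> 'e set \<Rightarrow> 'c set \<Rightarrow> 'e \<Rightarrow> bool" where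
  "rainbow_horn V E ends col N C e \<longleftrightarrow> e \<in> N \<and>
     (\<exists>e1\<in>edges_between E ends (ends e) (V - vset ends N).
      \<exists>e2\<in>edges_between E ends (ends e) (V - vset ends N).
        ends e1 \<inter> ends e2 = {} \<and> col e1 \<in> C \<and> col e2 \<in> C \<and> col e1 \<noteq> col e2)"

end

theory Submission
  imports Defs
begin

(* Double counting the pairs (c, e) with e a c-horn gives
   sum over e in N of #{c in C. e is a c-horn} >= k |C| > 2 |N|, so some e = xy in N is a
   c-horn for three distinct colours. Each of them gives edges x u_i and y v_i of that colour
   with u_i, v_i distinct vertices outside V(N). If u_i = v_j for all i, j distinct, then
   u_1 = v_2 = u_3 = v_1, which is impossible; so some u_i differs from some v_j with i, j
   distinct, and the edges x u_i and y v_j witness a rainbow horn. *)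

lemma sum_card_filter_swap:
  assumes "finite A" "finite B"
  shows "(\<Sum>a\<in>A. card {b\<in>B. P a b}) = (\<Sum>b\<in>B. card {a\<in>A. P a b})"
proof -
  have count: "\<And>X Q. finite X \<Longrightarrow> card {x\<in>X. Q x} = (\<Sum>x\<in>X. if Q x then 1 else 0)"
    by (simp add: sum.inter_filter[symmetric])
  have "(\<Sum>a\<in>A. card {b\<in>B. P a b}) = (\<Sum>a\<in>A. \<Sum>b\<in>B. if P a b then 1 else 0)"
    using count[OF assms(2)] by simp
  also have "\<dots> = (\<Sum>b\<in>B. \<Sum>a\<in>A. if P a b then 1 else 0)"
    by (rule sum.swap)
  also have "\<dots> = (\<Sum>b\<in>B. card {a\<in>A. P a b})"
    using count[OF assms(1)] by simp
  finally show ?thesis .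
qed

lemma exists_card_filter_gt:
  assumes "finite B" and "\<forall>a\<in>A. k \<le> card {b\<in>B. P a b}" and "m * card B < k * card A"
  shows "\<exists>b\<in>B. m < card {a\<in>A. P a b}"
proof (rule ccontr)
  assume "\<not> ?thesis"
  then have bounded: "\<forall>b\<in>B. card {a\<in>A. P a b} \<le> m"
    by (simp add: not_less)
  have "finite A"
    using assms(3) by (metis card.infinite mult_0_right not_less0)
  have "card A * k \<le> (\<Sum>a\<in>A. card {b\<in>B. P a b})"
    using sum_bounded_below[of A k "\<lambda>a. card {b\<in>B. P a b}"] assms(2) by simp
  also have "\<dots> = (\<Sum>b\<in>B. card {a\<in>A. P a b})"
    by (rule sum_card_filter_swap[OF \<open>finite A\<close> assms(1)])
  also have "\<dots> \<le> card B * m"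
    using sum_bounded_above[of B "\<lambda>b. card {a\<in>A. P a b}" m] bounded by simp
  finally show False
    using assms(3) by (simp add: mult.commute)
qed

lemma card_gt_2_obtain:
  assumes "2 < card S"
  obtains a b c where "a \<in> S" "b \<in> S" "c \<in> S" "a \<noteq> b" "a \<noteq> c" "b \<noteq> c"
proof -
  obtain T where "T \<subseteq> S" "card T = 3"
    using assms obtain_subset_with_card_n[of 3 S] by (metis Suc_le_eq numeral_2_eq_2 numeral_3_eq_3)
  moreover obtain a b c where "T = {a, b, c}" "a \<noteq> b" "b \<noteq> c" "a \<noteq> c"
    using \<open>card T = 3\<close> unfolding card_3_iff by blast
  ultimately show ?thesis
    using that by auto
qed

lemma matching_edge_ends:
  assumes "multigraph V E ends" "matching E ends N" "e \<in> N"
  obtains x y where "ends e = {x, y}" "x \<noteq> y" "x \<in> vset ends N" "y \<in> vset ends N"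
proof -
  have "card (ends e) = 2"
    using assms unfolding multigraph_def matching_def by auto
  then obtain x y where "ends e = {x, y}" "x \<noteq> y"
    by (meson card_2_iff)
  then show ?thesis
    using that assms(3) unfolding vset_def by blast
qed

lemma c_horn_oriented:
  assumes "c_horn V E ends col N c e" and "ends e = {x, y}" and "x \<noteq> y"
  obtains a b u v where
    "a \<in> edges_between E ends (ends e) (V - vset ends N)"
    "b \<in> edges_between E ends (ends e) (V - vset ends N)"
    "ends a = {x, u}" "ends b = {y, v}" "u \<in> V - vset ends N" "v \<in> V - vset ends N"
    "u \<noteq> v" "col a = c" "col b = c"
proof -
  let ?B = "edges_between E ends (ends e) (V - vset ends N)"
  obtain e1 e2 where e12: "e1 \<in> ?B" "e2 \<in> ?B" "ends e1 \<inter> ends e2 = {}" "col e1 = c" "col e2 = c"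
    using assms(1) unfolding c_horn_def by blast
  obtain z1 w1 where z1: "z1 \<in> {x, y}" "w1 \<in> V - vset ends N" "ends e1 = {z1, w1}"
    using e12(1) assms(2) unfolding edges_between_def by auto
  obtain z2 w2 where z2: "z2 \<in> {x, y}" "w2 \<in> V - vset ends N" "ends e2 = {z2, w2}"
    using e12(2) assms(2) unfolding edges_between_def by auto
  have "w1 \<noteq> w2" "z1 \<noteq> z2"
    using e12(3) z1 z2 by auto
  then consider "z1 = x" "z2 = y" | "z1 = y" "z2 = x"
    using z1(1) z2(1) by blast
  then show ?thesis
  proof cases
    case 1
    then show ?thesis using that e12 z1 z2 \<open>w1 \<noteq> w2\<close> by simp
  next
    case 2
    then show ?thesis using that[of e2 e1 w2 w1] e12 z1 z2 \<open>w1 \<noteq> w2\<close> by simp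
  qed
qed

lemma exists_cross_ne:
  assumes "2 < card K" and "\<forall>i\<in>K. u i \<noteq> v i"
  obtains i j where "i \<in> K" "j \<in> K" "i \<noteq> j" "u i \<noteq> v j"
proof -
  obtain i j l where "i \<in> K" "j \<in> K" "l \<in> K" "i \<noteq> j" "i \<noteq> l" "j \<noteq> l"
    using assms(1) by (rule card_gt_2_obtain)
  moreover have "u i \<noteq> v i"
    using assms(2) \<open>i \<in> K\<close> by blast
  then have "u i \<noteq> v j \<or> u l \<noteq> v j \<or> u l \<noteq> v i"
    by auto
  ultimately show ?thesis
    using that by blast
qed

lemma rainbow_horn_if_c_horns:
  assumes "multigraph V E ends" "matching E ends N" "e \<in> N"
    and "K \<subseteq> C" "2 < card K" "\<forall>c\<in>K. c_horn V E ends col N c e"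
  shows "rainbow_horn V E ends col N C e"
proof -
  let ?W = "V - vset ends N"
  let ?B = "edges_between E ends (ends e) ?W"
  obtain x y where xy: "ends e = {x, y}" "x \<noteq> y" "x \<notin> ?W" "y \<notin> ?W"
    using matching_edge_ends[OF assms(1-3)] by blast
  define arm where "arm z w c \<longleftrightarrow> (\<exists>a\<in>?B. ends a = {z, w} \<and> w \<in> ?W \<and> col a = c)" for z w c
  have "\<forall>c\<in>K. \<exists>u v. u \<noteq> v \<and> arm x u c \<and> arm y v c"
  proof
    fix c
    assume "c \<in> K"
    with assms(6) have horn: "c_horn V E ends col N c e"
      by blast
    obtain a b u v where "a \<in> ?B" "b \<in> ?B" "ends a = {x, u}" "ends b = {y, v}"
      "u \<in> ?W" "v \<in> ?W" "u \<noteq> v" "col a = c" "col b = c"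
      by (rule c_horn_oriented[OF horn xy(1,2)])
    then show "\<exists>u v. u \<noteq> v \<and> arm x u c \<and> arm y v c"
      unfolding arm_def by blast
  qed
  then obtain u v where uv: "\<forall>c\<in>K. u c \<noteq> v c \<and> arm x (u c) c \<and> arm y (v c) c"
    by metis
  then obtain i j where ij: "i \<in> K" "j \<in> K" "i \<noteq> j" "u i \<noteq> v j"
    using exists_cross_ne[OF assms(5)] by blast
  obtain a where a: "a \<in> ?B" "ends a = {x, u i}" "u i \<in> ?W" "col a = i"
    using uv ij(1) unfolding arm_def by blast
  obtain b where b: "b \<in> ?B" "ends b = {y, v j}" "v j \<in> ?W" "col b = j"
    using uv ij(2) unfolding arm_def by blast
  have "ends a \<inter> ends b = {}"
    using a b ij(4) xy by auto
  moreover have "col a \<in> C" "col b \<in> C" "col a \<noteq> col b"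
    using a b ij assms(4) by auto
  ultimately show ?thesis
    unfolding rainbow_horn_def using assms(3) a(1) b(1) by blast
qed

theorem lemma2p2:
  fixes V :: "'v set" and E :: "'e set" and ends :: "'e \<Rightarrow> 'v set"
    and col :: "'e \<Rightarrow> 'c" and N :: "'e set" and C :: "'c set" and k :: nat
  assumes "multigraph V E ends"
    and "matching E ends N"
    and "\<forall>c\<in>C. card {e\<in>N. c_horn V E ends col N c e} \<ge> k"
    and "k * card C > 2 * card N"
  shows "\<exists>e. rainbow_horn V E ends col N C e"
proof -
  have "finite N"
    using assms(1,2) finite_subset unfolding multigraph_def matching_def by blast
  then obtain e where "e \<in> N" and many_colours: "2 < card {c\<in>C. c_horn V E ends col N c e}"
    using exists_card_filter_gt[OF _ assms(3,4)] by blast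
  have "rainbow_horn V E ends col N C e"
    by (rule rainbow_horn_if_c_horns[OF assms(1,2) \<open>e \<in> N\<close> _ many_colours]) auto
  then show ?thesis ..
qed

end
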